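(* Let $0<p<1$ and $f\in L^p(\mathbb{R}^n)$. Then for every $\varepsilon>0$ there exists a sequence of rational functions $R_k\in\mathcal{A}$, $k\ge1$, such that $\sum_{k=1}^\infty\|R_k\|_p^p\le(1+\varepsilon)\|f\|_p^p$ and $\lim_{N\to\infty}\|f-\sum_{k=1}^N R_k\|_p=0$.
   Context: $\mathcal{A}$ is the set of functions on $\mathbb{R}^n$ of the form $R(x)=\dfrac{P(x)}{(1+x_1^2)^{l_1}\cdots(1+x_n^2)^{l_n}}$, where $l_1,\dots,l_n$ are nonnegative integers and $P(x)=\sum_{k_1=0}^{s_1}\cdots\sum_{k_n=0}^{s_n}\alpha_k x_1^{k_1}\cdots x_n^{k_n}$ is a polynomial with complex coefficients whose degree $s_j=\deg_jP$ in the variable $x_j$ satisfies $2l_j>\deg_jP$ for each $j=1,\dots,n$. $\|\cdot\|_p$ is the $L^p(\mathbb{R}^n)$ quasi-norm. *)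

theory Defs
  imports "HOL-Analysis.Analysis"
begin

definition ratA :: "(real^'n \<Rightarrow> complex) set" where
  "ratA = {R. \<exists>(l::'n \<Rightarrow> nat) (s::'n \<Rightarrow> nat) (\<alpha>::('n \<Rightarrow> nat) \<Rightarrow> complex).
      (\<forall>j. 2 * l j > s j) \<and>
      (\<forall>x. R x = (\<Sum>k\<in>{k. \<forall>j. k j \<le> s j}. \<alpha> k * (\<Prod>j\<in>UNIV. complex_of_real ((x $ j) ^ (k j))))
                 / complex_of_real (\<Prod>j\<in>UNIV. (1 + (x $ j)^2) ^ (l j)))}"

definition Lp_int :: "real \<Rightarrow> (real^'n \<Rightarrow> complex) \<Rightarrow> ennreal" where
  "Lp_int p f = (\<integral>\<^sup>+ x. ennreal (cmod (f x) powr p) \<partial>lebesgue)"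

definition in_Lp :: "real \<Rightarrow> (real^'n \<Rightarrow> complex) \<Rightarrow> bool" where
  "in_Lp p f \<longleftrightarrow> f \<in> borel_measurable lebesgue \<and> Lp_int p f < \<infinity>"

text \<open>The L^p quasi-norm (meaningful for f in L^p).\<close>
definition Lp_norm :: "real \<Rightarrow> (real^'n \<Rightarrow> complex) \<Rightarrow> real" where
  "Lp_norm p f = (enn2real (Lp_int p f)) powr (1 / p)"

end

theory Submission
  imports Defs
begin

text \<open>For 0 < p \<le> 1 the functional f \<mapsto> \<integral>|f|^p is subadditive, so it is enough to approximate
  every f \<in> L^p arbitrarily well by elements of ratA \<inter> L^p: choosing R_k as an approximation of
  the residual f - (R_0 + ... + R_(k-1)) with error \<delta>_k, each |R_k|_p^p is bounded by the sum of
  two consecutive residuals, whence \<Sum>_k |R_k|_p^p \<le> |f|_p^p + 2 \<Sum>_k \<delta>_k.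

  Density: continuous compactly supported g are dense in L^p. Write g = \<psi> / w with
  w x = \<Prod>_j (1 + x_j^2)^L and \<psi> compactly supported. Through the coordinatewise inverse
  stereographic projection, \<psi> becomes a continuous function on a compact set, which
  Stone-Weierstrass approximates uniformly within \<eta> by polynomials; these pull back to rational
  functions P with deg_j P \<le> 2 l_j, and P / w \<in> ratA approximates g with L^p error at most
  \<eta>^p \<integral> w^(-p), which is finite once 2 L p > n.\<close>

section \<open>Subadditivity of the p-th power integral\<close>

lemma powr_add_le:
  fixes a b p :: real
  assumes "0 < p" "p \<le> 1" "0 \<le> a" "0 \<le> b"
  shows "(a + b) powr p \<le> a powr p + b powr p"
proof (cases "a + b = 0")
  case True
  then show ?thesis using assms by auto
next
  case False
  then have s: "a + b > 0" using assms by auto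
  have le_powr: "t \<le> t powr p" if "0 \<le> t" "t \<le> 1" for t :: real
    using powr_mono'[of p 1 t] that assms by simp
  have "1 = a / (a + b) + b / (a + b)"
    using s by (simp add: add_divide_distrib[symmetric])
  also have "\<dots> \<le> (a / (a + b)) powr p + (b / (a + b)) powr p"
    using assms s by (intro add_mono le_powr) auto
  also have "\<dots> = (a powr p + b powr p) / (a + b) powr p"
    using assms s by (simp add: powr_divide add_divide_distrib)
  finally show ?thesis using s by (simp add: divide_simps)
qed

lemma norm_add_powr_le:
  fixes a b :: "'a::real_normed_vector"
  assumes "0 < p" "p \<le> 1"
  shows "norm (a + b) powr p \<le> norm a powr p + norm b powr p"
proof -
  have "norm (a + b) powr p \<le> (norm a + norm b) powr p"
    using assms by (intro powr_mono2) (auto simp: norm_triangle_ineq)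
  also have "\<dots> \<le> norm a powr p + norm b powr p"
    using assms by (intro powr_add_le) auto
  finally show ?thesis .
qed

lemma Lp_int_add_le:
  assumes "0 < p" "p \<le> 1" "f \<in> borel_measurable lebesgue" "g \<in> borel_measurable lebesgue"
  shows "Lp_int p (\<lambda>x. f x + g x) \<le> Lp_int p f + Lp_int p g"
proof -
  have "Lp_int p (\<lambda>x. f x + g x)
      \<le> (\<integral>\<^sup>+ x. ennreal (cmod (f x) powr p) + ennreal (cmod (g x) powr p) \<partial>lebesgue)"
    unfolding Lp_int_def
    by (intro nn_integral_mono) (simp add: norm_add_powr_le assms flip: ennreal_plus)
  also have "\<dots> = Lp_int p f + Lp_int p g"
    unfolding Lp_int_def using assms by (intro nn_integral_add) auto
  finally show ?thesis .
qed

lemma Lp_int_diff_le: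
  assumes "0 < p" "p \<le> 1"
    and "f \<in> borel_measurable lebesgue" "g \<in> borel_measurable lebesgue" "h \<in> borel_measurable lebesgue"
  shows "Lp_int p (\<lambda>x. f x - h x) \<le> Lp_int p (\<lambda>x. f x - g x) + Lp_int p (\<lambda>x. g x - h x)"
  using Lp_int_add_le[OF assms(1,2), of "\<lambda>x. f x - g x" "\<lambda>x. g x - h x"] assms by simp

lemma Lp_int_cmult:
  assumes "f \<in> borel_measurable lebesgue"
  shows "Lp_int p (\<lambda>x. c * f x) = ennreal (cmod c powr p) * Lp_int p f"
proof -
  have "Lp_int p (\<lambda>x. c * f x)
      = (\<integral>\<^sup>+ x. ennreal (cmod c powr p) * ennreal (cmod (f x) powr p) \<partial>lebesgue)"
    unfolding Lp_int_def by (simp add: norm_mult powr_mult ennreal_mult)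
  also have "\<dots> = ennreal (cmod c powr p) * Lp_int p f"
    unfolding Lp_int_def using assms by (intro nn_integral_cmult) auto
  finally show ?thesis .
qed

lemma Lp_int_uminus: "Lp_int p (\<lambda>x. - f x) = Lp_int p f"
  unfolding Lp_int_def by simp

lemma Lp_int_zero: "Lp_int p (\<lambda>_. 0) = 0"
  unfolding Lp_int_def by simp

lemma Lp_norm_powr:
  assumes "0 < p"
  shows "Lp_norm p f powr p = enn2real (Lp_int p f)"
  unfolding Lp_norm_def using assms by (simp add: powr_powr)

lemma continuous_on_imp_lebesgue_measurable:
  fixes f :: "'a::euclidean_space \<Rightarrow> 'b::{second_countable_topology, topological_space}"
  assumes "continuous_on UNIV f"
  shows "f \<in> borel_measurable lebesgue"
  using borel_measurable_continuous_onI[OF assms] by (intro measurable_completion) simp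

section \<open>Polynomials and rational functions in several variables\<close>

definition multiindices_le :: "('n::finite \<Rightarrow> nat) \<Rightarrow> ('n \<Rightarrow> nat) set" where
  "multiindices_le s = {k. \<forall>j. k j \<le> s j}"

definition monomial_fun :: "('n::finite \<Rightarrow> nat) \<Rightarrow> real^'n \<Rightarrow> complex" where
  "monomial_fun k x = (\<Prod>j\<in>UNIV. complex_of_real ((x $ j) ^ k j))"

definition poly_fun :: "('n::finite \<Rightarrow> nat) \<Rightarrow> (real^'n \<Rightarrow> complex) set" where
  "poly_fun s = {P. \<exists>\<alpha>. \<forall>x. P x = (\<Sum>k\<in>multiindices_le s. \<alpha> k * monomial_fun k x)}"

definition weight :: "('n::finite \<Rightarrow> nat) \<Rightarrow> real^'n \<Rightarrow> real" where
  "weight l x = (\<Prod>j\<in>UNIV. (1 + (x $ j)^2) ^ l j)"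

text \<open>Unlike in ratA, the degree condition is not strict, so that this class is an algebra of
  bounded functions; one further division by a weight moves it into ratA.\<close>
definition bdd_rat :: "(real^'n::finite \<Rightarrow> complex) set" where
  "bdd_rat = {F. \<exists>s l P. (\<forall>j. s j \<le> 2 * l j) \<and> P \<in> poly_fun s \<and>
                         (\<forall>x. F x = P x / complex_of_real (weight l x))}"

lemma finite_multiindices_le: "finite (multiindices_le s)"
proof -
  have "multiindices_le s \<subseteq> PiE UNIV (\<lambda>j. {..s j})"
    by (auto simp: multiindices_le_def PiE_def extensional_def)
  then show ?thesis by (rule finite_subset) (intro finite_PiE, auto)
qed

lemma monomial_fun_add: "monomial_fun (\<lambda>j. a j + b j) x = monomial_fun a x * monomial_fun b x"
  by (simp add: monomial_fun_def power_add prod.distrib)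

lemma poly_funI:
  assumes "\<And>x. P x = (\<Sum>k\<in>multiindices_le s. \<alpha> k * monomial_fun k x)"
  shows "P \<in> poly_fun s"
  using assms unfolding poly_fun_def by blast

lemma poly_funE:
  assumes "P \<in> poly_fun s"
  obtains \<alpha> where "\<And>x. P x = (\<Sum>k\<in>multiindices_le s. \<alpha> k * monomial_fun k x)"
  using assms that unfolding poly_fun_def by auto

lemma poly_fun_monomial:
  assumes "k \<in> multiindices_le s"
  shows "(\<lambda>x. c * monomial_fun k x) \<in> poly_fun s"
proof (rule poly_funI)
  fix x
  have "(\<Sum>i\<in>multiindices_le s. (if i = k then c else 0) * monomial_fun i x)
      = (\<Sum>i\<in>multiindices_le s. if i = k then c * monomial_fun k x else 0)"
    by (rule sum.cong) auto
  then show "c * monomial_fun k x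
      = (\<Sum>i\<in>multiindices_le s. (if i = k then c else 0) * monomial_fun i x)"
    using assms finite_multiindices_le[of s] by simp
qed

lemma poly_fun_mono:
  assumes "\<And>j. s j \<le> t j" "P \<in> poly_fun s"
  shows "P \<in> poly_fun t"
proof -
  obtain \<alpha> where \<alpha>: "\<And>x. P x = (\<Sum>k\<in>multiindices_le s. \<alpha> k * monomial_fun k x)"
    using assms(2) by (elim poly_funE) blast
  have sub: "multiindices_le s \<subseteq> multiindices_le t"
    using assms(1) by (auto simp: multiindices_le_def intro: order_trans)
  show ?thesis
  proof (rule poly_funI)
    fix x
    have "P x = (\<Sum>k\<in>multiindices_le s. (if k \<in> multiindices_le s then \<alpha> k else 0) * monomial_fun k x)"
      using \<alpha> by simp
    also have "\<dots> = (\<Sum>k\<in>multiindices_le t. (if k \<in> multiindices_le s then \<alpha> k else 0) * monomial_fun k x)"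
      by (rule sum.mono_neutral_left) (use sub finite_multiindices_le in auto)
    finally show "P x = \<dots>" .
  qed
qed

lemma poly_fun_add:
  assumes "P \<in> poly_fun s" "Q \<in> poly_fun s"
  shows "(\<lambda>x. P x + Q x) \<in> poly_fun s"
proof -
  obtain \<alpha> where "\<And>x. P x = (\<Sum>k\<in>multiindices_le s. \<alpha> k * monomial_fun k x)"
    using assms(1) by (elim poly_funE) blast
  moreover obtain \<beta> where "\<And>x. Q x = (\<Sum>k\<in>multiindices_le s. \<beta> k * monomial_fun k x)"
    using assms(2) by (elim poly_funE) blast
  ultimately show ?thesis
    by (intro poly_funI[where \<alpha>="\<lambda>k. \<alpha> k + \<beta> k"]) (simp add: sum.distrib distrib_right)
qed

lemma poly_fun_const: "(\<lambda>x. c) \<in> poly_fun s"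
  using poly_fun_monomial[of "\<lambda>_. 0" s c] by (simp add: multiindices_le_def monomial_fun_def)

lemma poly_fun_coord: "(\<lambda>x. complex_of_real (x $ j)) \<in> poly_fun (\<lambda>i. if i = j then 1 else 0)"
proof -
  have "monomial_fun (\<lambda>i. if i = j then 1 else 0) x = complex_of_real (x $ j)" for x
    by (simp add: monomial_fun_def if_distrib prod.If_cases)
  then show ?thesis
    using poly_fun_monomial[of "\<lambda>i. if i = j then 1 else 0" _ 1] by (simp add: multiindices_le_def)
qed

lemma poly_fun_mult:
  assumes "P \<in> poly_fun s" "Q \<in> poly_fun t"
  shows "(\<lambda>x. P x * Q x) \<in> poly_fun (\<lambda>j. s j + t j)"
proof -
  obtain \<alpha> where \<alpha>: "\<And>x. P x = (\<Sum>k\<in>multiindices_le s. \<alpha> k * monomial_fun k x)"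
    using assms(1) by (elim poly_funE) blast
  obtain \<beta> where \<beta>: "\<And>x. Q x = (\<Sum>k\<in>multiindices_le t. \<beta> k * monomial_fun k x)"
    using assms(2) by (elim poly_funE) blast
  define I where "I = multiindices_le s \<times> multiindices_le t"
  define add where "add ab = (\<lambda>j. fst ab j + snd ab j)" for ab :: "('a \<Rightarrow> nat) \<times> ('a \<Rightarrow> nat)"
  define \<gamma> where "\<gamma> k = (\<Sum>ab\<in>{ab \<in> I. add ab = k}. \<alpha> (fst ab) * \<beta> (snd ab))" for k
  have add_I: "add ` I \<subseteq> multiindices_le (\<lambda>j. s j + t j)"
    by (auto simp: I_def add_def multiindices_le_def add_mono)
  show ?thesis
  proof (rule poly_funI)
    fix x
    have "P x * Q x = (\<Sum>ab\<in>I. \<alpha> (fst ab) * \<beta> (snd ab) * monomial_fun (add ab) x)"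
      unfolding \<alpha> \<beta> I_def
      by (simp add: sum_product sum.cartesian_product add_def monomial_fun_add mult_ac case_prod_beta)
    also have "\<dots> = (\<Sum>k\<in>multiindices_le (\<lambda>j. s j + t j).
                      \<Sum>ab\<in>{ab \<in> I. add ab = k}. \<alpha> (fst ab) * \<beta> (snd ab) * monomial_fun (add ab) x)"
      by (rule sum.group[symmetric]) (use add_I finite_multiindices_le in \<open>auto simp: I_def\<close>)
    also have "\<dots> = (\<Sum>k\<in>multiindices_le (\<lambda>j. s j + t j). \<gamma> k * monomial_fun k x)"
      unfolding \<gamma>_def sum_distrib_right by (intro sum.cong refl) auto
    finally show "P x * Q x = \<dots>" .
  qed
qed

lemma poly_fun_power:
  assumes "P \<in> poly_fun s"
  shows "(\<lambda>x. P x ^ m) \<in> poly_fun (\<lambda>j. m * s j)"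
proof (induction m)
  case 0
  then show ?case using poly_fun_const[of 1] by simp
next
  case (Suc m)
  from poly_fun_mult[OF assms Suc] show ?case by (simp add: add.commute)
qed

lemma poly_fun_prod:
  assumes "finite J" "\<And>j. j \<in> J \<Longrightarrow> P j \<in> poly_fun (s j)"
  shows "(\<lambda>x. \<Prod>j\<in>J. P j x) \<in> poly_fun (\<lambda>i. \<Sum>j\<in>J. s j i)"
  using assms
proof (induction J rule: finite_induct)
  case empty
  then show ?case using poly_fun_const[of 1] by simp
next
  case (insert a J)
  then show ?case using poly_fun_mult[of "P a" "s a" "\<lambda>x. \<Prod>j\<in>J. P j x"] by simp
qed

lemma poly_fun_coord_square:
  "(\<lambda>x. complex_of_real ((x $ j)^2)) \<in> poly_fun (\<lambda>i. if i = j then 2 else 0)"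
proof -
  have "(\<lambda>i. (if i = j then 1 else 0) + (if i = j then 1 else 0)) = (\<lambda>i. if i = j then 2 else (0::nat))"
    by auto
  then show ?thesis
    using poly_fun_mult[OF poly_fun_coord[of j] poly_fun_coord[of j]] by (simp add: power2_eq_square)
qed

lemma poly_fun_weight: "(\<lambda>x. complex_of_real (weight l x)) \<in> poly_fun (\<lambda>j. 2 * l j)"
proof -
  have "(\<lambda>x. (1 + complex_of_real ((x $ j)^2)) ^ l j) \<in> poly_fun (\<lambda>i. l j * (if i = j then 2 else 0))"
    for j by (intro poly_fun_power poly_fun_add poly_fun_const poly_fun_coord_square)
  then have "(\<lambda>x. \<Prod>j\<in>UNIV. (1 + complex_of_real ((x $ j)^2)) ^ l j)
      \<in> poly_fun (\<lambda>i. \<Sum>j\<in>UNIV. l j * (if i = j then 2 else 0))"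
    by (intro poly_fun_prod) auto
  moreover have "(\<lambda>i. \<Sum>j\<in>UNIV. l j * (if i = j then 2 else (0::nat))) = (\<lambda>j. 2 * l j)"
    by (auto simp: if_distrib cong: if_cong)
  ultimately show ?thesis by (simp add: weight_def)
qed

lemma weight_pos: "weight l x > 0"
  unfolding weight_def by (intro prod_pos zero_less_power) (simp add: add_pos_nonneg)

lemma weight_nonzero [simp]: "weight l x \<noteq> 0"
  using weight_pos[of l x] by simp

lemma weight_add: "weight (\<lambda>j. l j + m j) x = weight l x * weight m x"
  by (simp add: weight_def power_add prod.distrib)

lemma weight_ge_1: "weight l x \<ge> 1"
  unfolding weight_def by (intro prod_ge_1 one_le_power) simp

lemma weight_ge_factor: "weight l x \<ge> (1 + (x $ j)^2) ^ l j"
proof -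
  have "weight l x = (1 + (x $ j)^2) ^ l j * (\<Prod>i\<in>UNIV - {j}. (1 + (x $ i)^2) ^ l i)"
    unfolding weight_def by (rule prod.remove) auto
  moreover have "(\<Prod>i\<in>UNIV - {j}. (1 + (x $ i)^2) ^ l i) \<ge> 1"
    by (intro prod_ge_1 one_le_power) simp
  ultimately show ?thesis
    by (metis mult_left_mono mult.right_neutral zero_le_power add_nonneg_nonneg zero_le_one zero_le_power2)
qed

lemma continuous_on_weight: "continuous_on UNIV (weight l)"
  unfolding weight_def by (intro continuous_intros)

lemma bdd_ratI:
  assumes "\<And>j. s j \<le> 2 * l j" "P \<in> poly_fun s" "\<And>x. F x = P x / complex_of_real (weight l x)"
  shows "F \<in> bdd_rat"
  using assms unfolding bdd_rat_def by blast

lemma bdd_ratE: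
  assumes "F \<in> bdd_rat"
  obtains s l P where "\<And>j. s j \<le> 2 * l j" "P \<in> poly_fun s"
    "\<And>x. F x = P x / complex_of_real (weight l x)"
  using assms that unfolding bdd_rat_def by auto

lemma bdd_rat_add:
  assumes "F \<in> bdd_rat" "G \<in> bdd_rat"
  shows "(\<lambda>x. F x + G x) \<in> bdd_rat"
proof -
  obtain s l P where F: "\<And>j. s j \<le> 2 * l j" "P \<in> poly_fun s"
    "\<And>x. F x = P x / complex_of_real (weight l x)"
    using assms(1) by (elim bdd_ratE) blast
  obtain t m Q where G: "\<And>j. t j \<le> 2 * m j" "Q \<in> poly_fun t"
    "\<And>x. G x = Q x / complex_of_real (weight m x)"
    using assms(2) by (elim bdd_ratE) blast
  have PG: "(\<lambda>x. P x * complex_of_real (weight m x)) \<in> poly_fun (\<lambda>j. 2 * (l j + m j))"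
    by (rule poly_fun_mono[OF _ poly_fun_mult[OF F(2) poly_fun_weight]]) (use F(1) in auto)
  have QF: "(\<lambda>x. Q x * complex_of_real (weight l x)) \<in> poly_fun (\<lambda>j. 2 * (l j + m j))"
    by (rule poly_fun_mono[OF _ poly_fun_mult[OF G(2) poly_fun_weight]]) (use G(1) in auto)
  have "F x + G x = (P x * complex_of_real (weight m x) + Q x * complex_of_real (weight l x))
      / complex_of_real (weight (\<lambda>j. l j + m j) x)" for x
    using weight_pos[of l x] weight_pos[of m x] by (simp add: F(3) G(3) weight_add field_simps)
  from bdd_ratI[OF _ poly_fun_add[OF PG QF] this] show ?thesis by simp
qed

lemma bdd_rat_mult:
  assumes "F \<in> bdd_rat" "G \<in> bdd_rat"
  shows "(\<lambda>x. F x * G x) \<in> bdd_rat"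
proof -
  obtain s l P where F: "\<And>j. s j \<le> 2 * l j" "P \<in> poly_fun s"
    "\<And>x. F x = P x / complex_of_real (weight l x)"
    using assms(1) by (elim bdd_ratE) blast
  obtain t m Q where G: "\<And>j. t j \<le> 2 * m j" "Q \<in> poly_fun t"
    "\<And>x. G x = Q x / complex_of_real (weight m x)"
    using assms(2) by (elim bdd_ratE) blast
  show ?thesis
    by (rule bdd_ratI[OF _ poly_fun_mult[OF F(2) G(2)], where l="\<lambda>j. l j + m j"])
      (use F(1) G(1) in \<open>auto simp: F(3) G(3) weight_add add_mono\<close>)
qed

lemma bdd_rat_const: "(\<lambda>x. c) \<in> bdd_rat"
  by (rule bdd_ratI[OF _ poly_fun_const, where l="\<lambda>_. 0"]) (auto simp: weight_def)

lemma bdd_rat_sum: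
  assumes "finite J" "\<And>j. j \<in> J \<Longrightarrow> F j \<in> bdd_rat"
  shows "(\<lambda>x. \<Sum>j\<in>J. F j x) \<in> bdd_rat"
  using assms
proof (induction J rule: finite_induct)
  case empty
  then show ?case using bdd_rat_const[of 0] by simp
next
  case (insert a J)
  then show ?case using bdd_rat_add[of "F a" "\<lambda>x. \<Sum>j\<in>J. F j x"] by simp
qed

lemma bdd_rat_div_coord_weight:
  assumes "P \<in> poly_fun (\<lambda>i. if i = j then 2 else 0)"
  shows "(\<lambda>x. P x / complex_of_real (1 + (x $ j)^2)) \<in> bdd_rat"
proof -
  have "weight (\<lambda>i. if i = j then 1 else 0) x = 1 + (x $ j)^2" for x
    by (simp add: weight_def if_distrib prod.If_cases cong: if_cong)
  then show ?thesis by (intro bdd_ratI[OF _ assms, where l="\<lambda>i. if i = j then 1 else 0"]) auto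
qed

lemma bdd_rat_div_weight_in_ratA:
  assumes "F \<in> bdd_rat" "L \<ge> 1"
  shows "(\<lambda>x. F x / complex_of_real (weight (\<lambda>_. L) x)) \<in> ratA"
proof -
  obtain s l P where F: "\<And>j. s j \<le> 2 * l j" "P \<in> poly_fun s"
    "\<And>x. F x = P x / complex_of_real (weight l x)"
    using assms(1) by (elim bdd_ratE) blast
  obtain \<alpha> where \<alpha>: "\<And>x. P x = (\<Sum>k\<in>multiindices_le s. \<alpha> k * monomial_fun k x)"
    using F(2) by (elim poly_funE) blast
  have "\<forall>j. s j < 2 * (l j + L)"
  proof
    fix j
    show "s j < 2 * (l j + L)" using F(1)[of j] assms(2) by simp
  qed
  moreover have "\<forall>x. F x / complex_of_real (weight (\<lambda>_. L) x)
      = P x / complex_of_real (weight (\<lambda>j. l j + L) x)"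
    by (simp add: F(3) weight_add)
  ultimately show ?thesis
    unfolding ratA_def weight_def \<alpha> multiindices_le_def monomial_fun_def
    by (intro CollectI exI[of _ "\<lambda>j. l j + L"] exI[of _ s] exI[of _ \<alpha>]) simp
qed

lemma zero_in_ratA: "(\<lambda>_. 0) \<in> ratA"
  unfolding ratA_def by (intro CollectI exI[of _ "\<lambda>_. 1"] exI[of _ "\<lambda>_. 0"] exI[of _ "\<lambda>_. 0"]) simp

section \<open>Inverse stereographic projection\<close>

text \<open>Coordinatewise inverse stereographic projection of the line onto the unit circle,
  tan (\<theta>/2) \<mapsto> (sin \<theta>, cos \<theta>): it maps \<real>^n into a compact set, and polynomials
  composed with it lie in bdd_rat.\<close>
definition stereo_sin :: "real^'n \<Rightarrow> real^'n" where
  "stereo_sin x = (\<chi> j. 2 * x $ j / (1 + (x $ j)^2))"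

definition stereo_cos :: "real^'n \<Rightarrow> real^'n" where
  "stereo_cos x = (\<chi> j. (1 - (x $ j)^2) / (1 + (x $ j)^2))"

definition stereo :: "real^'n \<Rightarrow> (real^'n) \<times> (real^'n)" where
  "stereo x = (stereo_sin x, stereo_cos x)"

lemma bdd_rat_inner_stereo: "(\<lambda>x. complex_of_real (stereo x \<bullet> b)) \<in> bdd_rat"
proof -
  have sin: "(\<lambda>x. complex_of_real (stereo_sin x $ j)) \<in> bdd_rat" for j
  proof -
    have "(\<lambda>x. 2 * complex_of_real (x $ j)) \<in> poly_fun (\<lambda>i. if i = j then 2 else 0)"
      by (rule poly_fun_mono[OF _ poly_fun_mult[OF poly_fun_const poly_fun_coord]]) auto
    from bdd_rat_div_coord_weight[OF this] show ?thesis by (simp add: stereo_sin_def)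
  qed
  have cos: "(\<lambda>x. complex_of_real (stereo_cos x $ j)) \<in> bdd_rat" for j
  proof -
    have "(\<lambda>x. 1 + (-1) * complex_of_real ((x $ j)^2)) \<in> poly_fun (\<lambda>i. if i = j then 2 else 0)"
      by (intro poly_fun_add poly_fun_const poly_fun_mono[OF _ poly_fun_mult[OF poly_fun_const
            poly_fun_coord_square]]) auto
    from bdd_rat_div_coord_weight[OF this] show ?thesis by (simp add: stereo_cos_def)
  qed
  have "stereo x \<bullet> b = (\<Sum>j\<in>UNIV. stereo_sin x $ j * fst b $ j) + (\<Sum>j\<in>UNIV. stereo_cos x $ j * snd b $ j)"
    for x by (cases b) (simp add: stereo_def inner_vec_def)
  moreover have "(\<lambda>x. (\<Sum>j\<in>UNIV. complex_of_real (stereo_sin x $ j) * complex_of_real (fst b $ j))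
      + (\<Sum>j\<in>UNIV. complex_of_real (stereo_cos x $ j) * complex_of_real (snd b $ j))) \<in> bdd_rat"
    by (intro bdd_rat_add bdd_rat_sum bdd_rat_mult sin cos bdd_rat_const) auto
  ultimately show ?thesis by simp
qed

lemma bdd_rat_real_polynomial_stereo:
  assumes "real_polynomial_function q"
  shows "(\<lambda>x. complex_of_real (q (stereo x))) \<in> bdd_rat"
  using assms
proof (induction rule: real_polynomial_function.induct)
  case (linear f)
  have f: "f v = (\<Sum>b\<in>Basis. (v \<bullet> b) * f b)" for v
    using Linear_Algebra.linear_componentwise[OF bounded_linear.linear[OF linear], of v 1] by simp
  have "(\<lambda>x. \<Sum>b\<in>Basis. complex_of_real (stereo x \<bullet> b) * complex_of_real (f b)) \<in> bdd_rat"
    by (intro bdd_rat_sum bdd_rat_mult bdd_rat_inner_stereo bdd_rat_const) auto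
  then show ?case by (subst f) simp
next
  case (const c)
  then show ?case by (rule bdd_rat_const)
next
  case (add f g)
  then show ?case using bdd_rat_add[OF add.IH] by simp
next
  case (mult f g)
  then show ?case using bdd_rat_mult[OF mult.IH] by simp
qed

lemma bdd_rat_polynomial_stereo:
  fixes Q :: "(real^'n) \<times> (real^'n) \<Rightarrow> complex"
  assumes "polynomial_function Q"
  shows "(\<lambda>x. Q (stereo x)) \<in> bdd_rat"
proof -
  have "real_polynomial_function (\<lambda>v. Re (Q v))" "real_polynomial_function (\<lambda>v. Im (Q v))"
    using assms unfolding polynomial_function_def comp_def
    by (auto intro: bounded_linear_Re bounded_linear_Im)
  then have "(\<lambda>x. complex_of_real (Re (Q (stereo x))) + complex_of_real (Im (Q (stereo x))) * \<i>) \<in> bdd_rat"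
    by (intro bdd_rat_add bdd_rat_mult bdd_rat_real_polynomial_stereo bdd_rat_const)
  moreover have "complex_of_real (Re z) + complex_of_real (Im z) * \<i> = z" for z
    by (simp add: complex_eq_iff)
  ultimately show ?thesis by simp
qed

lemma continuous_on_stereo: "continuous_on UNIV stereo"
proof -
  have "1 + (x $ j)^2 \<noteq> 0" for x :: "real^'n" and j
    by (metis add_pos_nonneg zero_less_one zero_le_power2 less_irrefl)
  then show ?thesis unfolding stereo_def stereo_sin_def stereo_cos_def
    by (intro continuous_intros) auto
qed

lemma norm_stereo_le: "norm (stereo (x::real^'n)) \<le> 2 * real CARD('n)"
proof -
  have bound: "norm v \<le> real CARD('n)" if "\<And>j. \<bar>v $ j\<bar> \<le> 1" for v :: "real^'n"
    using norm_le_l1_cart[of v] sum_mono[of UNIV "\<lambda>j. \<bar>v $ j\<bar>" "\<lambda>_. 1"] that by simp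
  have "\<bar>stereo_sin x $ j\<bar> \<le> 1" for j
  proof -
    have "2 * \<bar>x $ j\<bar> \<le> 1 + (x $ j)^2"
      using sum_squares_bound[of "\<bar>x $ j\<bar>" 1] by (simp add: power2_abs)
    then show ?thesis
      unfolding stereo_sin_def by (simp add: abs_mult abs_divide divide_le_eq_1) (smt (verit) zero_le_power2)
  qed
  moreover have "\<bar>stereo_cos x $ j\<bar> \<le> 1" for j
    unfolding stereo_cos_def by (simp add: abs_divide divide_le_eq_1) (smt (verit) zero_le_power2)
  ultimately have "norm (stereo_sin x) \<le> real CARD('n)" "norm (stereo_cos x) \<le> real CARD('n)"
    by (auto intro: bound)
  then show ?thesis
    using norm_Pair_le[of "stereo_sin x" "stereo_cos x"] by (simp add: stereo_def)
qed

lemma one_add_stereo_cos: "1 + stereo_cos x $ j = 2 / (1 + (x $ j)^2)"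
proof -
  have "1 + (x $ j)^2 > 0" by (simp add: add_pos_nonneg)
  then show ?thesis unfolding stereo_cos_def by (simp add: field_simps)
qed

lemma stereo_sin_div_one_add_stereo_cos: "stereo_sin x $ j / (1 + stereo_cos x $ j) = x $ j"
proof -
  have "1 + (x $ j)^2 > 0" by (simp add: add_pos_nonneg)
  then show ?thesis unfolding one_add_stereo_cos by (simp add: stereo_sin_def field_simps)
qed

text \<open>The inverse of stereo is x_j = a_j / (1 + c_j). Where \<psi> can be nonzero, 1 + c_j \<ge> \<tau>;
  taking the maximum with \<tau>/2 keeps the division continuous, and the cutoff factor vanishes
  wherever some 1 + c_j < \<tau>/2.\<close>
definition stereo_lift :: "real \<Rightarrow> (real^'n \<Rightarrow> complex) \<Rightarrow> (real^'n) \<times> (real^'n) \<Rightarrow> complex" where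
  "stereo_lift \<tau> \<psi> v = \<psi> (\<chi> j. fst v $ j / max (1 + snd v $ j) (\<tau>/2))
     * complex_of_real (\<Prod>j\<in>UNIV. min 1 (max 0 ((2 * (1 + snd v $ j) - \<tau>) / \<tau>)))"

lemma continuous_on_stereo_lift:
  fixes \<psi> :: "real^'n \<Rightarrow> complex"
  assumes "continuous_on UNIV \<psi>" "\<tau> > 0"
  shows "continuous_on UNIV (stereo_lift \<tau> \<psi>)"
proof -
  have "max (1 + c) (\<tau>/2) \<noteq> 0" for c using assms(2) by (simp add: max_def)
  then have "continuous_on UNIV (\<lambda>v::(real^'n) \<times> (real^'n). \<chi> j. fst v $ j / max (1 + snd v $ j) (\<tau>/2))"
    by (intro continuous_intros) auto
  then have "continuous_on UNIV (\<lambda>v. \<psi> (\<chi> j. fst v $ j / max (1 + snd v $ j) (\<tau>/2)))"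
    by (rule continuous_on_compose2[OF assms(1)]) auto
  moreover have "continuous_on UNIV (\<lambda>v::(real^'n) \<times> (real^'n).
      complex_of_real (\<Prod>j\<in>UNIV. min 1 (max 0 ((2 * (1 + snd v $ j) - \<tau>) / \<tau>))))"
    using assms(2) by (intro continuous_intros) auto
  ultimately show ?thesis
    unfolding stereo_lift_def[abs_def] by (rule continuous_on_mult)
qed

lemma stereo_lift_stereo:
  assumes "\<tau> > 0" and large: "\<And>j. \<psi> x \<noteq> 0 \<Longrightarrow> 1 + stereo_cos x $ j \<ge> \<tau>"
  shows "stereo_lift \<tau> \<psi> (stereo x) = \<psi> x"
proof (cases "\<forall>j. 1 + stereo_cos x $ j \<ge> \<tau>/2")
  case True
  then have "(\<chi> j. stereo_sin x $ j / max (1 + stereo_cos x $ j) (\<tau>/2)) = x"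
    by (simp add: vec_eq_iff stereo_sin_div_one_add_stereo_cos max_absorb1)
  moreover have "min 1 (max 0 ((2 * (1 + stereo_cos x $ j) - \<tau>) / \<tau>)) = 1" if "\<psi> x \<noteq> 0" for j
    using large[OF that, of j] assms(1) by (simp add: field_simps)
  ultimately show ?thesis by (cases "\<psi> x = 0") (simp_all add: stereo_lift_def stereo_def)
next
  case False
  then obtain j where j: "1 + stereo_cos x $ j < \<tau>/2" by (auto simp: not_le)
  then have "min 1 (max 0 ((2 * (1 + stereo_cos x $ j) - \<tau>) / \<tau>)) = 0"
    using assms(1) by (simp add: divide_neg_pos)
  then have "(\<Prod>j\<in>UNIV. min 1 (max 0 ((2 * (1 + stereo_cos x $ j) - \<tau>) / \<tau>))) = 0"
    by (intro prod_zero) auto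
  moreover have "\<psi> x = 0" using large[of j] j assms(1) by fastforce
  ultimately show ?thesis by (simp add: stereo_lift_def stereo_def)
qed

lemma continuous_factor_through_stereo:
  fixes \<psi> :: "real^'n \<Rightarrow> complex"
  assumes cont: "continuous_on UNIV \<psi>" and supp: "bounded {x. \<psi> x \<noteq> 0}"
  obtains G where "continuous_on UNIV G" "\<And>x. G (stereo x) = \<psi> x"
proof -
  obtain M where M: "\<And>x. \<psi> x \<noteq> 0 \<Longrightarrow> norm x \<le> M" using supp by (auto simp: bounded_iff)
  define \<tau> where "\<tau> = 2 / (1 + M^2)"
  have \<tau>: "\<tau> > 0" by (simp add: \<tau>_def add_pos_nonneg)
  have "stereo_lift \<tau> \<psi> (stereo x) = \<psi> x" for x
  proof (rule stereo_lift_stereo[OF \<tau>])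
    fix j
    assume "\<psi> x \<noteq> 0"
    then have "\<bar>x $ j\<bar> \<le> M" using M component_le_norm_cart[of x j] by fastforce
    then have "(x $ j)^2 \<le> M^2" by (metis abs_ge_zero power2_abs power_mono)
    then show "1 + stereo_cos x $ j \<ge> \<tau>" unfolding one_add_stereo_cos \<tau>_def
      by (intro divide_left_mono) (auto simp: add_pos_nonneg)
  qed
  with continuous_on_stereo_lift[OF cont \<tau>] show ?thesis using that by blast
qed

lemma uniform_approx_by_bdd_rat:
  fixes \<psi> :: "real^'n \<Rightarrow> complex"
  assumes "continuous_on UNIV \<psi>" "bounded {x. \<psi> x \<noteq> 0}" "\<eta> > 0"
  obtains P where "P \<in> bdd_rat" "continuous_on UNIV P" "\<And>x. cmod (\<psi> x - P x) < \<eta>"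
proof -
  obtain G where G: "continuous_on UNIV G" "\<And>x. G (stereo x) = \<psi> x"
    using continuous_factor_through_stereo[OF assms(1,2)] by blast
  define K where "K = cball (0 :: (real^'n) \<times> (real^'n)) (2 * real CARD('n))"
  obtain Q where Q: "polynomial_function Q" "\<forall>v\<in>K. norm (G v - Q v) < \<eta>"
    using Stone_Weierstrass_polynomial_function[of K G \<eta>] G(1) assms(3)
    unfolding K_def by (auto intro: continuous_on_subset)
  have "continuous_on UNIV (\<lambda>x. Q (stereo x))"
    by (rule continuous_on_compose2[OF continuous_on_polymonial_function[OF Q(1)] continuous_on_stereo]) auto
  moreover have "cmod (\<psi> x - Q (stereo x)) < \<eta>" for x
    using Q(2) norm_stereo_le[of x] by (auto simp: K_def G(2)[symmetric])
  ultimately show ?thesis using that bdd_rat_polynomial_stereo[OF Q(1)] by blast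
qed

section \<open>Integrability of inverse powers of the weight\<close>

definition dyadic_cube :: "nat \<Rightarrow> (real^'n) set" where
  "dyadic_cube m = cbox (vec (- (2^m))) (vec (2^m))"

lemma mem_dyadic_cube: "x \<in> dyadic_cube m \<longleftrightarrow> (\<forall>j. \<bar>x $ j\<bar> \<le> 2^m)"
  by (auto simp: dyadic_cube_def mem_box_cart abs_le_iff; metis minus_le_iff neg_le_iff_le)

lemma sets_lebesgue_dyadic_cube [measurable]: "dyadic_cube m \<in> sets lebesgue"
  unfolding dyadic_cube_def by (simp add: lmeasurable_cbox fmeasurableD)

lemma emeasure_dyadic_cube:
  "emeasure lebesgue (dyadic_cube m :: (real^'n) set) = ennreal ((2^(m+1)) ^ CARD('n))"
proof -
  have "dyadic_cube m \<noteq> ({} :: (real^'n) set)"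
    using mem_dyadic_cube[of "0::real^'n" m] by auto
  then show ?thesis
    unfolding dyadic_cube_def by (simp add: emeasure_eq_measure2 lmeasurable_cbox content_cbox_cart)
qed

lemma inverse_weight_powr_le:
  assumes "0 < p" "\<bar>x $ j\<bar> > 2^k"
  shows "(1 / weight (\<lambda>_. L) x) powr p \<le> (4 powr (- (L * p))) ^ k"
proof -
  have "(4::real)^k = (2^k)^2" by (simp add: power2_eq_square power_mult_distrib[symmetric])
  also have "\<dots> \<le> (x $ j)^2" using assms(2) by (metis abs_le_square_iff less_imp_le zero_le_power abs_of_nonneg zero_le_numeral)
  also have "\<dots> \<le> 1 + (x $ j)^2" by simp
  finally have "((4::real)^k)^L \<le> (1 + (x $ j)^2)^L" by (rule power_mono) simp
  also have "\<dots> \<le> weight (\<lambda>_. L) x" using weight_ge_factor[where l="\<lambda>_. L" and x=x and j=j] by simp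
  moreover have "((4::real)^k)^L = 4 powr (real (k * L))"
    by (subst powr_realpow) (simp_all add: power_mult)
  ultimately have w: "4 powr (real (k * L)) \<le> weight (\<lambda>_. L) x" by simp
  have "(1 / weight (\<lambda>_. L) x) powr p = weight (\<lambda>_. L) x powr (- p)"
    using weight_pos[of "\<lambda>_. L" x] by (simp add: powr_minus_divide powr_divide)
  also have "\<dots> \<le> (4 powr (real (k * L))) powr (- p)"
    using w assms(1) by (intro powr_mono2') auto
  also have "\<dots> = 4 powr (real k * (- (L * p)))"
    unfolding powr_powr by (rule arg_cong[where f="(powr) 4"]) (simp add: algebra_simps)
  also have "\<dots> = (4 powr (- (L * p))) ^ k"
    by (rule powr_power[symmetric]) simp
  finally show ?thesis .
qed

lemma inverse_weight_powr_le_cube_sum: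
  fixes x :: "real^'n" and L :: nat and p :: real
  assumes "0 < p"
  defines "q \<equiv> 4 powr (- (L * p))"
  shows "ennreal ((1 / weight (\<lambda>_. L) x) powr p)
    \<le> (\<Sum>m. ennreal (q ^ m / q) * indicator (dyadic_cube m) x)"
proof -
  have "q \<le> 4 powr 0" unfolding q_def using assms(1) by (intro powr_mono) auto
  then have q: "0 < q" "q \<le> 1" by (auto simp: q_def)
  obtain m where "norm x < 2 ^ m" using real_arch_pow[of 2 "norm x"] by auto
  then have "x \<in> dyadic_cube m"
    unfolding mem_dyadic_cube using component_le_norm_cart[of x] by (meson less_imp_le order_trans)
  define m0 where "m0 = (LEAST m. x \<in> dyadic_cube m)"
  have x_m0: "x \<in> dyadic_cube m0" unfolding m0_def by (rule LeastI) fact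
  have "(1 / weight (\<lambda>_. L) x) powr p \<le> q ^ m0 / q"
  proof (cases m0)
    case 0
    have "(1 / weight (\<lambda>_. L) x) powr p \<le> 1"
      using weight_ge_1[of "\<lambda>_. L" x] assms(1) by (intro powr_le1) auto
    also have "1 \<le> q ^ m0 / q" using 0 q by simp
    finally show ?thesis .
  next
    case (Suc k)
    then have "x \<notin> dyadic_cube k"
      using not_less_Least[of k "\<lambda>m. x \<in> dyadic_cube m"] by (auto simp: m0_def)
    then obtain j where "\<bar>x $ j\<bar> > 2^k" by (auto simp: mem_dyadic_cube not_le)
    from inverse_weight_powr_le[OF assms(1) this, of L] show ?thesis
      using Suc q by (simp add: q_def)
  qed
  then have "ennreal ((1 / weight (\<lambda>_. L) x) powr p) \<le> ennreal (q ^ m0 / q) * indicator (dyadic_cube m0) x"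
    using x_m0 by (simp add: ennreal_leI)
  also have "\<dots> \<le> (\<Sum>m<Suc m0. ennreal (q ^ m / q) * indicator (dyadic_cube m) x)"
    by (rule member_le_sum) auto
  also have "\<dots> \<le> (\<Sum>m. ennreal (q ^ m / q) * indicator (dyadic_cube m) x)"
    by (rule sum_le_suminf) auto
  finally show ?thesis .
qed

lemma nn_integral_inverse_weight_powr_finite:
  assumes "0 < p" "real CARD('n) < 2 * L * p"
  shows "(\<integral>\<^sup>+x. ennreal ((1 / weight (\<lambda>_. L) (x::real^'n)) powr p) \<partial>lebesgue) < \<infinity>"
proof -
  define q where "q = (4::real) powr (- (L * p))"
  have q: "0 < q" by (simp add: q_def)
  define r where "r = q * 2 ^ CARD('n)"
  have "r < q * 4 powr (L * p)"
  proof -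
    have "(2::real) ^ CARD('n) = 2 powr CARD('n)" by (simp add: powr_realpow)
    also have "\<dots> < 2 powr (2 * L * p)" using assms(2) by simp
    also have "\<dots> = 4 powr (L * p)" by (simp add: powr_powr[symmetric] mult.assoc)
    finally show ?thesis using q by (simp add: r_def)
  qed
  also have "q * 4 powr (L * p) = 1" by (simp add: q_def powr_add[symmetric])
  finally have r: "0 \<le> r" "r < 1" using q by (auto simp: r_def)
  have cube_term: "q ^ m / q * (2 ^ (m + 1)) ^ CARD('n) = (2 ^ CARD('n) / q) * r ^ m" for m
  proof -
    have "((2::real) ^ m) ^ CARD('n) = (2 ^ CARD('n)) ^ m" by (simp add: power_mult[symmetric] mult.commute)
    then show ?thesis using q by (simp add: r_def power_mult_distrib power_add field_simps)
  qed
  have "(\<integral>\<^sup>+x. ennreal ((1 / weight (\<lambda>_. L) (x::real^'n)) powr p) \<partial>lebesgue)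
      \<le> (\<integral>\<^sup>+x. (\<Sum>m. ennreal (q ^ m / q) * indicator (dyadic_cube m) (x::real^'n)) \<partial>lebesgue)"
    using inverse_weight_powr_le_cube_sum[OF assms(1), where L=L] unfolding q_def
    by (intro nn_integral_mono) simp
  also have "\<dots> = (\<Sum>m. ennreal (q ^ m / q) * emeasure lebesgue (dyadic_cube m :: (real^'n) set))"
    by (subst nn_integral_suminf) (simp_all add: nn_integral_cmult_indicator)
  also have "\<dots> = (\<Sum>m. ennreal (q ^ m / q * (2 ^ (m + 1)) ^ CARD('n)))"
    using q by (simp add: emeasure_dyadic_cube flip: ennreal_mult)
  also have "\<dots> = (\<Sum>m. ennreal ((2 ^ CARD('n) / q) * r ^ m))"
    by (simp only: cube_term)
  also have "\<dots> = ennreal (\<Sum>m. (2 ^ CARD('n) / q) * r ^ m)"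
    using q r by (intro suminf_ennreal2 summable_mult summable_geometric) auto
  also have "\<dots> < \<infinity>" by simp
  finally show ?thesis .
qed

lemma exists_weight_exponent:
  fixes p :: real
  assumes "0 < p"
  obtains L :: nat where "L \<ge> 1" "real CARD('n) < 2 * real L * p"
proof
  define L where "L = nat \<lceil>real CARD('n) / p\<rceil> + 1"
  show "L \<ge> 1" by (simp add: L_def)
  have "real CARD('n) / p + 1 \<le> real L" unfolding L_def by linarith
  then have "real CARD('n) + p \<le> real L * p"
    using assms by (simp add: field_simps)
  then show "real CARD('n) < 2 * real L * p" using assms by linarith
qed

lemma Lp_int_le_inverse_weight:
  fixes h :: "real^'n \<Rightarrow> complex"
  assumes "0 < p" "\<eta> \<ge> 0" "\<And>x. cmod (h x) \<le> \<eta> / weight (\<lambda>_. L) x"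
  shows "Lp_int p h \<le> ennreal (\<eta> powr p) * (\<integral>\<^sup>+x. ennreal ((1 / weight (\<lambda>_. L) (x::real^'n)) powr p) \<partial>lebesgue)"
proof -
  have "cmod (h x) powr p \<le> \<eta> powr p * (1 / weight (\<lambda>_. L) x) powr p" for x
  proof -
    have "cmod (h x) powr p \<le> (\<eta> * (1 / weight (\<lambda>_. L) x)) powr p"
      using assms by (intro powr_mono2) auto
    also have "\<dots> = \<eta> powr p * (1 / weight (\<lambda>_. L) x) powr p"
      using assms(2) weight_pos[of "\<lambda>_. L" x] by (subst powr_mult) auto
    finally show ?thesis .
  qed
  then have "Lp_int p h
      \<le> (\<integral>\<^sup>+x. ennreal (\<eta> powr p) * ennreal ((1 / weight (\<lambda>_. L) (x::real^'n)) powr p) \<partial>lebesgue)"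
    unfolding Lp_int_def by (intro nn_integral_mono) (simp add: ennreal_leI flip: ennreal_mult)
  also have "\<dots> = ennreal (\<eta> powr p) * (\<integral>\<^sup>+x. ennreal ((1 / weight (\<lambda>_. L) (x::real^'n)) powr p) \<partial>lebesgue)"
  proof (rule nn_integral_cmult)
    have "continuous_on UNIV (\<lambda>x::real^'n. (1 / weight (\<lambda>_. L) x) powr p)"
      by (intro continuous_intros continuous_on_weight) auto
    then show "(\<lambda>x::real^'n. ennreal ((1 / weight (\<lambda>_. L) x) powr p)) \<in> borel_measurable lebesgue"
      by (intro measurable_compose[OF continuous_on_imp_lebesgue_measurable measurable_ennreal])
  qed
  finally show ?thesis .
qed

section \<open>Approximation with respect to the p-th power integral\<close>

definition Lp_approx :: "real \<Rightarrow> (real^'n \<Rightarrow> complex) set \<Rightarrow> (real^'n \<Rightarrow> complex) \<Rightarrow> bool" where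
  "Lp_approx p S f \<longleftrightarrow> (\<forall>\<delta>>0. \<exists>g\<in>S. Lp_int p (\<lambda>x. f x - g x) < ennreal \<delta>)"

lemma Lp_approxI:
  assumes "\<And>\<delta>. \<delta> > 0 \<Longrightarrow> \<exists>g\<in>S. Lp_int p (\<lambda>x. f x - g x) < ennreal \<delta>"
  shows "Lp_approx p S f"
  using assms unfolding Lp_approx_def by blast

lemma Lp_approxE:
  assumes "Lp_approx p S f" "\<delta> > 0"
  obtains g where "g \<in> S" "Lp_int p (\<lambda>x. f x - g x) < ennreal \<delta>"
  using assms unfolding Lp_approx_def by blast

lemma Lp_approx_self: "g \<in> S \<Longrightarrow> Lp_approx p S g"
  unfolding Lp_approx_def Lp_int_def by (auto intro!: bexI[where x=g])

lemma Lp_approx_mono: "Lp_approx p S f \<Longrightarrow> S \<subseteq> T \<Longrightarrow> Lp_approx p T f"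
  unfolding Lp_approx_def by blast

lemma Lp_approx_tendsto:
  assumes "(\<lambda>m. Lp_int p (\<lambda>x. f x - g m x)) \<longlonglongrightarrow> 0"
  shows "Lp_approx p (range g) f"
proof (rule Lp_approxI)
  fix \<delta> :: real
  assume "\<delta> > 0"
  then have "eventually (\<lambda>m. Lp_int p (\<lambda>x. f x - g m x) < ennreal \<delta>) sequentially"
    using assms by (intro order_tendstoD(2)) auto
  then show "\<exists>h\<in>range g. Lp_int p (\<lambda>x. f x - h x) < ennreal \<delta>"
    by (auto simp: eventually_sequentially)
qed

lemma Lp_approx_trans:
  assumes p: "0 < p" "p \<le> 1" and f: "f \<in> borel_measurable lebesgue"
    and T: "T \<subseteq> borel_measurable lebesgue" and S: "S \<subseteq> borel_measurable lebesgue"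
    and "Lp_approx p T f" and approx_T: "\<And>h. h \<in> T \<Longrightarrow> Lp_approx p S h"
  shows "Lp_approx p S f"
proof (rule Lp_approxI)
  fix \<delta> :: real
  assume "\<delta> > 0"
  then obtain h where h: "h \<in> T" "Lp_int p (\<lambda>x. f x - h x) < ennreal (\<delta>/2)"
    using Lp_approxE[OF \<open>Lp_approx p T f\<close>, of "\<delta>/2"] by auto
  obtain g where g: "g \<in> S" "Lp_int p (\<lambda>x. h x - g x) < ennreal (\<delta>/2)"
    using Lp_approxE[OF approx_T[OF h(1)], of "\<delta>/2"] \<open>\<delta> > 0\<close> by auto
  have "Lp_int p (\<lambda>x. f x - g x) \<le> Lp_int p (\<lambda>x. f x - h x) + Lp_int p (\<lambda>x. h x - g x)"
    using p f h(1) g(1) T S by (intro Lp_int_diff_le) auto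
  also have "\<dots> < ennreal (\<delta>/2 + \<delta>/2)"
    using h(2) g(2) by (rule add_mono_ennreal)
  finally show "\<exists>g\<in>S. Lp_int p (\<lambda>x. f x - g x) < ennreal \<delta>" using g(1) by auto
qed

lemma Lp_approx_add:
  assumes p: "0 < p" "p \<le> 1"
    and f: "f \<in> borel_measurable lebesgue" and h: "h \<in> borel_measurable lebesgue"
    and S: "S \<subseteq> borel_measurable lebesgue" "\<And>g g'. g \<in> S \<Longrightarrow> g' \<in> S \<Longrightarrow> (\<lambda>x. g x + g' x) \<in> S"
    and "Lp_approx p S f" "Lp_approx p S h"
  shows "Lp_approx p S (\<lambda>x. f x + h x)"
proof (rule Lp_approxI)
  fix \<delta> :: real
  assume "\<delta> > 0"
  then obtain g g' where g: "g \<in> S" "Lp_int p (\<lambda>x. f x - g x) < ennreal (\<delta>/2)"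
    and g': "g' \<in> S" "Lp_int p (\<lambda>x. h x - g' x) < ennreal (\<delta>/2)"
    using \<open>Lp_approx p S f\<close> \<open>Lp_approx p S h\<close> by (metis Lp_approxE half_gt_zero)
  have "Lp_int p (\<lambda>x. f x + h x - (g x + g' x)) = Lp_int p (\<lambda>x. (f x - g x) + (h x - g' x))"
    by (simp add: algebra_simps)
  also have "\<dots> \<le> Lp_int p (\<lambda>x. f x - g x) + Lp_int p (\<lambda>x. h x - g' x)"
    using p f h g(1) g'(1) S(1) by (intro Lp_int_add_le) auto
  also have "\<dots> < ennreal (\<delta>/2 + \<delta>/2)"
    using g(2) g'(2) by (rule add_mono_ennreal)
  finally show "\<exists>g\<in>S. Lp_int p (\<lambda>x. f x + h x - g x) < ennreal \<delta>"
    using S(2)[OF g(1) g'(1)] by auto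
qed

lemma Lp_approx_sum:
  assumes p: "0 < p" "p \<le> 1" and "finite I"
    and f: "\<And>i. i \<in> I \<Longrightarrow> f i \<in> borel_measurable lebesgue" "\<And>i. i \<in> I \<Longrightarrow> Lp_approx p S (f i)"
    and S: "S \<subseteq> borel_measurable lebesgue" "(\<lambda>_. 0) \<in> S"
      "\<And>g g'. g \<in> S \<Longrightarrow> g' \<in> S \<Longrightarrow> (\<lambda>x. g x + g' x) \<in> S"
  shows "Lp_approx p S (\<lambda>x. \<Sum>i\<in>I. f i x)"
  using \<open>finite I\<close> f
proof (induction I rule: finite_induct)
  case empty
  then show ?case using Lp_approx_self[OF S(2)] by simp
next
  case (insert i I)
  then have "Lp_approx p S (\<lambda>x. f i x + (\<Sum>i\<in>I. f i x))"
    using p S by (intro Lp_approx_add) auto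
  then show ?case using insert by simp
qed

lemma Lp_approx_cmult:
  assumes f: "f \<in> borel_measurable lebesgue"
    and S: "S \<subseteq> borel_measurable lebesgue" "\<And>g. g \<in> S \<Longrightarrow> (\<lambda>x. c * g x) \<in> S"
    and "Lp_approx p S f"
  shows "Lp_approx p S (\<lambda>x. c * f x)"
proof (rule Lp_approxI)
  fix \<delta> :: real
  assume "\<delta> > 0"
  define C where "C = cmod c powr p + 1"
  have C: "C > 0" "cmod c powr p < C" by (simp_all add: C_def add_nonneg_pos)
  obtain g where g: "g \<in> S" "Lp_int p (\<lambda>x. f x - g x) < ennreal (\<delta> / C)"
    using Lp_approxE[OF \<open>Lp_approx p S f\<close>, of "\<delta> / C"] \<open>\<delta> > 0\<close> C by auto
  have "Lp_int p (\<lambda>x. c * f x - c * g x) = ennreal (cmod c powr p) * Lp_int p (\<lambda>x. f x - g x)"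
    using Lp_int_cmult[of "\<lambda>x. f x - g x" p c] f g(1) S(1) by (auto simp: algebra_simps)
  also have "\<dots> \<le> ennreal (cmod c powr p) * ennreal (\<delta> / C)"
    using g(2) by (intro mult_left_mono) auto
  also have "\<dots> = ennreal (cmod c powr p * (\<delta> / C))"
    using \<open>\<delta> > 0\<close> C by (intro ennreal_mult[symmetric]) auto
  also have "\<dots> < ennreal \<delta>"
    using \<open>\<delta> > 0\<close> C by (intro ennreal_lessI) (auto simp: field_simps)
  finally show "\<exists>g\<in>S. Lp_int p (\<lambda>x. c * f x - g x) < ennreal \<delta>"
    using S(2)[OF g(1)] by auto
qed

section \<open>Density of continuous functions with compact support\<close>

definition cc_funs :: "(real^'n \<Rightarrow> complex) set" where
  "cc_funs = {g. continuous_on UNIV g \<and> bounded {x. g x \<noteq> 0}}"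

lemma cc_funs_measurable: "g \<in> cc_funs \<Longrightarrow> g \<in> borel_measurable lebesgue"
  by (simp add: cc_funs_def continuous_on_imp_lebesgue_measurable)

lemma cc_funs_add:
  assumes "g \<in> cc_funs" "g' \<in> cc_funs"
  shows "(\<lambda>x. g x + g' x) \<in> cc_funs"
proof -
  have "bounded ({x. g x \<noteq> 0} \<union> {x. g' x \<noteq> 0})" using assms by (simp add: cc_funs_def)
  then have "bounded {x. g x + g' x \<noteq> 0}" by (rule bounded_subset) auto
  then show ?thesis using assms unfolding cc_funs_def by (auto intro: continuous_on_add)
qed

lemma cc_funs_cmult:
  assumes "g \<in> cc_funs"
  shows "(\<lambda>x. c * g x) \<in> cc_funs"
proof -
  have "{x. c * g x \<noteq> 0} \<subseteq> {x. g x \<noteq> 0}" by auto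
  with assms show ?thesis
    unfolding cc_funs_def by (auto intro: continuous_on_mult continuous_on_const bounded_subset)
qed

lemma zero_in_cc_funs: "(\<lambda>_. 0) \<in> cc_funs"
  by (simp add: cc_funs_def)

lemma cc_funs_subset_measurable: "cc_funs \<subseteq> borel_measurable lebesgue"
  using cc_funs_measurable by blast

lemma in_Lp_cc_fun:
  fixes g :: "real^'n \<Rightarrow> complex"
  assumes "0 < p" "g \<in> cc_funs"
  shows "in_Lp p g"
proof -
  obtain M where M: "\<And>x. g x \<noteq> 0 \<Longrightarrow> norm x \<le> M"
    using assms(2) by (auto simp: cc_funs_def bounded_iff)
  have "bounded (g ` cball 0 M)" using assms(2)
    by (intro compact_imp_bounded compact_continuous_image) (auto simp: cc_funs_def intro: continuous_on_subset)
  then obtain B where B: "\<forall>x\<in>cball 0 M. cmod (g x) \<le> B" unfolding bounded_iff by auto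
  have "ennreal (cmod (g x) powr p) \<le> ennreal (B powr p) * indicator (cball 0 M) x" for x
  proof (cases "g x = 0")
    case False
    then have "x \<in> cball 0 M" using M by auto
    with B assms(1) show ?thesis by (simp add: ennreal_leI powr_mono2)
  qed simp
  then have "Lp_int p g \<le> (\<integral>\<^sup>+x. ennreal (B powr p) * indicator (cball (0::real^'n) M) x \<partial>lebesgue)"
    unfolding Lp_int_def by (intro nn_integral_mono)
  also have "\<dots> = ennreal (B powr p) * emeasure lebesgue (cball (0::real^'n) M)"
    by (simp add: nn_integral_cmult_indicator)
  also have "\<dots> < \<infinity>"
    using lmeasurable_cball[of "0::real^'n" M] by (simp add: fmeasurable_def ennreal_mult_less_top)
  finally show ?thesis using cc_funs_measurable[OF assms(2)] by (simp add: in_Lp_def)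
qed

text \<open>Sandwich E between a closed and an open set of almost the same measure and take an
  Urysohn function for them.\<close>
lemma Lp_approx_indicator_bounded:
  fixes E :: "(real^'n) set"
  assumes p: "0 < p" and E: "E \<in> sets lebesgue" "bounded E"
  shows "Lp_approx p cc_funs (indicator E)"
proof (rule Lp_approxI)
  fix \<delta> :: real
  assume "\<delta> > 0"
  obtain T where T: "closed T" "T \<subseteq> E" "E - T \<in> lmeasurable" "emeasure lebesgue (E - T) < ennreal (\<delta>/2)"
    using sets_lebesgue_inner_closed[OF E(1), of "\<delta>/2"] \<open>\<delta> > 0\<close> by auto
  obtain U where U: "open U" "E \<subseteq> U" "U - E \<in> lmeasurable" "emeasure lebesgue (U - E) < ennreal (\<delta>/2)"
    using sets_lebesgue_outer_open[OF E(1), of "\<delta>/2"] \<open>\<delta> > 0\<close> by auto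
  obtain r where r: "E \<subseteq> ball 0 r" using bounded_subset_ballD[OF E(2)] by blast
  define V where "V = U \<inter> ball 0 r"
  have "closed (- V)" "T \<inter> - V = {}" using T(2) U(1,2) r by (auto simp: V_def)
  then obtain \<phi> :: "real^'n \<Rightarrow> real" where \<phi>: "continuous_on UNIV \<phi>" "\<And>x. \<phi> x \<in> closed_segment 1 0"
    "\<And>x. x \<in> T \<Longrightarrow> \<phi> x = 1" "\<And>x. x \<in> - V \<Longrightarrow> \<phi> x = 0"
    using Urysohn[OF T(1)] by blast
  define g where "g x = complex_of_real (\<phi> x)" for x
  have "{x. g x \<noteq> 0} \<subseteq> ball 0 r" using \<phi>(4) by (force simp: g_def V_def)
  then have g: "g \<in> cc_funs"
    unfolding cc_funs_def g_def by (auto intro!: continuous_intros \<phi>(1) intro: bounded_subset[OF bounded_ball])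
  define B where "B = (U - E) \<union> (E - T)"
  have "ennreal (cmod (indicator E x - g x) powr p) \<le> indicator B x" for x
  proof (cases "x \<in> B")
    case True
    have "indicator E x - g x = complex_of_real (indicator E x - \<phi> x)"
      by (simp add: g_def indicator_def)
    then have "cmod (indicator E x - g x) = \<bar>indicator E x - \<phi> x\<bar>"
      by (simp only: norm_of_real)
    also have "\<dots> \<le> 1" using \<phi>(2)[of x] by (auto simp: indicator_def closed_segment_eq_real_ivl)
    finally show ?thesis using True p by (simp add: ennreal_leI powr_le1)
  next
    case False
    then have "indicator E x - g x = 0"
      using \<phi>(3,4)[of x] by (auto simp: B_def V_def g_def indicator_def)
    then show ?thesis by simp
  qed
  then have "Lp_int p (\<lambda>x. indicator E x - g x) \<le> (\<integral>\<^sup>+x. indicator B x \<partial>lebesgue)"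
    unfolding Lp_int_def by (intro nn_integral_mono)
  also have "\<dots> = emeasure lebesgue B"
    using T(3) U(3) by (intro nn_integral_indicator) (auto simp: B_def fmeasurable_def)
  also have "\<dots> \<le> emeasure lebesgue (U - E) + emeasure lebesgue (E - T)"
    unfolding B_def by (rule emeasure_subadditive) (use T(3) U(3) in auto)
  also have "\<dots> < ennreal (\<delta>/2 + \<delta>/2)"
    using U(4) T(4) by (rule add_mono_ennreal)
  finally show "\<exists>g\<in>cc_funs. Lp_int p (\<lambda>x. indicator E x - g x) < ennreal \<delta>"
    using g by auto
qed

lemma emeasure_diff_ball_tendsto_zero:
  fixes E :: "'a::euclidean_space set"
  assumes "E \<in> sets lebesgue" "emeasure lebesgue E < \<infinity>"
  shows "(\<lambda>m. emeasure lebesgue (E - ball 0 (real m))) \<longlonglongrightarrow> 0"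
proof -
  have "(\<lambda>m. emeasure lebesgue (E - ball 0 (real m))) \<longlonglongrightarrow> emeasure lebesgue (\<Inter>m. E - ball 0 (real m))"
  proof (rule Lim_emeasure_decseq)
    show "range (\<lambda>m. E - ball 0 (real m)) \<subseteq> sets lebesgue"
      using assms(1) by (auto intro: sets.Diff fmeasurableD lmeasurable_ball)
    show "decseq (\<lambda>m. E - ball 0 (real m))"
      unfolding decseq_def by auto
    show "emeasure lebesgue (E - ball 0 (real m)) \<noteq> \<infinity>" for m
      using emeasure_mono[of "E - ball 0 (real m)" E lebesgue] assms by (auto simp: top_unique)
  qed
  moreover have "(\<Inter>m. E - ball 0 (real m)) = {}"
    by auto (meson reals_Archimedean2)
  ultimately show ?thesis by (metis emeasure_empty)
qed

lemma Lp_approx_indicator: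
  fixes E :: "(real^'n) set"
  assumes p: "0 < p" "p \<le> 1" and E: "E \<in> sets lebesgue" "emeasure lebesgue E < \<infinity>"
  shows "Lp_approx p cc_funs (indicator E)"
proof -
  have ball [measurable]: "ball (0::real^'n) r \<in> sets lebesgue" for r
    by (simp add: lmeasurable_ball fmeasurableD)
  have "Lp_int p (\<lambda>x. indicator E x - indicator (E \<inter> ball 0 (real m)) x)
      = emeasure lebesgue (E - ball 0 (real m))" for m
  proof -
    have "ennreal (cmod (indicator E x - indicator (E \<inter> ball 0 (real m)) x :: complex) powr p)
        = indicator (E - ball 0 (real m)) x" for x
      using p by (auto simp: indicator_def)
    then show ?thesis unfolding Lp_int_def using E(1) by simp
  qed
  then have approx: "Lp_approx p (range (\<lambda>m. indicator (E \<inter> ball 0 (real m)))) (indicator E)"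
    using emeasure_diff_ball_tendsto_zero[OF E] by (intro Lp_approx_tendsto) simp
  show ?thesis
  proof (rule Lp_approx_trans[OF p _ _ cc_funs_subset_measurable approx])
    show "range (\<lambda>m. indicator (E \<inter> ball 0 (real m)) :: real^'n \<Rightarrow> complex) \<subseteq> borel_measurable lebesgue"
      using E(1) by auto
    show "Lp_approx p cc_funs h" if "h \<in> range (\<lambda>m. indicator (E \<inter> ball 0 (real m)))" for h
      using that E(1) by (auto intro!: Lp_approx_indicator_bounded[OF p(1)] bounded_Int)
  qed (use E(1) in measurable)
qed

lemma Lp_approx_simple:
  fixes s :: "real^'n \<Rightarrow> complex"
  assumes p: "0 < p" "p \<le> 1" and s: "simple_function lebesgue s" and fin: "Lp_int p s < \<infinity>"
  shows "Lp_approx p cc_funs s"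
proof -
  have level_set [measurable]: "s -` {c} \<in> sets lebesgue" for c
  proof (cases "c \<in> range s")
    case True
    then show ?thesis using s by (auto simp: simple_function_def)
  next
    case False
    then have "s -` {c} = {}" by auto
    then show ?thesis by simp
  qed
  have level: "Lp_approx p cc_funs (\<lambda>x. c * indicator (s -` {c}) x)" for c
  proof (cases "c = 0")
    case True
    then show ?thesis using Lp_approx_self[OF zero_in_cc_funs] by simp
  next
    case False
    have "ennreal (cmod c powr p) * emeasure lebesgue (s -` {c})
        = (\<integral>\<^sup>+x. ennreal (cmod c powr p) * indicator (s -` {c}) x \<partial>lebesgue)"
      by (simp add: nn_integral_cmult_indicator)
    also have "\<dots> \<le> Lp_int p s"
      unfolding Lp_int_def by (intro nn_integral_mono) (auto split: split_indicator)
    also have "\<dots> < \<infinity>" by (rule fin)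
    finally have "emeasure lebesgue (s -` {c}) < \<infinity>"
      using False by (auto simp: ennreal_mult_less_top)
    then show ?thesis
      by (intro Lp_approx_cmult Lp_approx_indicator p cc_funs_subset_measurable cc_funs_cmult) auto
  qed
  have "Lp_approx p cc_funs (\<lambda>x. \<Sum>c\<in>range s. c * indicator (s -` {c}) x)"
    using s by (intro Lp_approx_sum p level cc_funs_subset_measurable zero_in_cc_funs cc_funs_add)
      (auto simp: simple_function_def)
  moreover have "(\<Sum>c\<in>range s. c * indicator (s -` {c}) x) = s x" for x
  proof -
    have "(\<Sum>c\<in>range s. c * indicator (s -` {c}) x) = (\<Sum>c\<in>range s. if c = s x then s x else 0)"
      by (rule sum.cong) auto
    also have "\<dots> = s x" using s by (simp add: simple_function_def)
    finally show ?thesis .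
  qed
  ultimately show ?thesis by simp
qed

lemma Lp_int_cmult_finite:
  assumes "in_Lp p f"
  shows "Lp_int p (\<lambda>x. c * f x) < \<infinity>"
  using assms by (simp add: in_Lp_def Lp_int_cmult ennreal_mult_less_top)

lemma Lp_int_mono:
  assumes "\<And>x. cmod (f x) \<le> cmod (g x)" "0 \<le> p"
  shows "Lp_int p f \<le> Lp_int p g"
  unfolding Lp_int_def using assms by (intro nn_integral_mono ennreal_leI powr_mono2) auto

lemma Lp_int_diff_tendsto_zero:
  fixes f :: "real^'n \<Rightarrow> complex"
  assumes p: "0 < p" and f: "in_Lp p f" and F: "\<And>i. F i \<in> borel_measurable lebesgue"
    and lim: "\<And>x. (\<lambda>i. F i x) \<longlonglongrightarrow> f x" and dom: "\<And>i x. cmod (F i x) \<le> C * cmod (f x)"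
  shows "(\<lambda>i. Lp_int p (\<lambda>x. f x - F i x)) \<longlonglongrightarrow> 0"
proof -
  define w where "w x = ennreal (cmod (complex_of_real (1 + \<bar>C\<bar>) * f x) powr p)" for x
  have [measurable]: "f \<in> borel_measurable lebesgue" "F i \<in> borel_measurable lebesgue" for i
    using f F by (auto simp: in_Lp_def)
  have [measurable]: "w \<in> borel_measurable lebesgue" unfolding w_def[abs_def] by measurable
  have "(\<lambda>i. Lp_int p (\<lambda>x. f x - F i x)) \<longlonglongrightarrow> (\<integral>\<^sup>+(x::real^'n). 0 \<partial>lebesgue)"
    unfolding Lp_int_def
  proof (rule nn_integral_dominated_convergence[where w=w])
    show "(\<lambda>x. 0) \<in> borel_measurable lebesgue" by simp
    show "(\<integral>\<^sup>+x. w x \<partial>lebesgue) < \<infinity>"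
      using Lp_int_cmult_finite[OF f] by (simp add: w_def Lp_int_def)
    show "AE x in lebesgue. ennreal (cmod (f x - F i x) powr p) \<le> w x" for i
    proof (rule AE_I2)
      fix x
      have "cmod (f x - F i x) \<le> cmod (f x) + cmod (F i x)" by (rule norm_triangle_ineq4)
      also have "\<dots> \<le> cmod (f x) + \<bar>C\<bar> * cmod (f x)"
        using dom[of i x] mult_right_mono[OF abs_ge_self[of C] norm_ge_zero[of "f x"]] by simp
      also have "\<dots> = cmod (complex_of_real (1 + \<bar>C\<bar>) * f x)"
        unfolding norm_mult norm_of_real by (simp add: distrib_right)
      finally show "ennreal (cmod (f x - F i x) powr p) \<le> w x"
        unfolding w_def using p by (intro ennreal_leI powr_mono2) auto
    qed
    show "AE x in lebesgue. (\<lambda>i. ennreal (cmod (f x - F i x) powr p)) \<longlonglongrightarrow> 0"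
    proof (rule AE_I2)
      fix x
      have "(\<lambda>i. cmod (f x - F i x)) \<longlonglongrightarrow> 0"
        using tendsto_diff[OF tendsto_const[of "f x"] lim[of x]] by (simp add: tendsto_norm_zero_iff)
      then have "(\<lambda>i. cmod (f x - F i x) powr p) \<longlonglongrightarrow> 0"
        by (rule tendsto_zero_powrI) (use p in auto)
      then show "(\<lambda>i. ennreal (cmod (f x - F i x) powr p)) \<longlonglongrightarrow> 0"
        using tendsto_ennrealI by fastforce
    qed
  next
    show "(\<lambda>x. ennreal (cmod (f x - F i x) powr p)) \<in> borel_measurable lebesgue" for i
      by measurable
  qed measurable
  then show ?thesis by simp
qed

lemma Lp_approx_simple_functions:
  fixes f :: "real^'n \<Rightarrow> complex"
  assumes p: "0 < p" and f: "in_Lp p f"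
  shows "Lp_approx p {s. simple_function lebesgue s \<and> Lp_int p s < \<infinity>} f"
proof -
  obtain F where F: "\<And>i. simple_function lebesgue (F i)" "\<And>x. (\<lambda>i. F i x) \<longlonglongrightarrow> f x"
    "\<And>i x. cmod (F i x) \<le> 2 * cmod (f x)"
    using borel_measurable_implies_sequence_metric[of f lebesgue 0] f
    by (auto simp: in_Lp_def dist_norm)
  have "(\<lambda>i. Lp_int p (\<lambda>x. f x - F i x)) \<longlonglongrightarrow> 0"
    using F by (intro Lp_int_diff_tendsto_zero[OF p f] borel_measurable_simple_function)
  then have "Lp_approx p (range F) f" by (rule Lp_approx_tendsto)
  moreover have "Lp_int p (F i) < \<infinity>" for i
  proof -
    have "Lp_int p (F i) \<le> Lp_int p (\<lambda>x. 2 * f x)"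
      using F(3) p by (intro Lp_int_mono) (auto simp: norm_mult)
    also have "\<dots> < \<infinity>" by (rule Lp_int_cmult_finite[OF f])
    finally show ?thesis .
  qed
  ultimately show ?thesis using F(1) by (auto elim!: Lp_approx_mono)
qed

lemma Lp_approx_cc_funs:
  fixes f :: "real^'n \<Rightarrow> complex"
  assumes p: "0 < p" "p \<le> 1" and f: "in_Lp p f"
  shows "Lp_approx p cc_funs f"
  using f by (intro Lp_approx_trans[OF p _ _ cc_funs_subset_measurable Lp_approx_simple_functions[OF p(1) f]])
    (auto simp: in_Lp_def intro: borel_measurable_simple_function Lp_approx_simple[OF p])

section \<open>Density of the rational functions\<close>

lemma in_Lp_of_Lp_int_diff:
  assumes p: "0 < p" "p \<le> 1" and g: "in_Lp p g"
    and R: "R \<in> borel_measurable lebesgue" "Lp_int p (\<lambda>x. g x - R x) < \<infinity>"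
  shows "in_Lp p R"
proof -
  have "Lp_int p (\<lambda>x. g x + - (g x - R x)) \<le> Lp_int p g + Lp_int p (\<lambda>x. - (g x - R x))"
    using g R(1) by (intro Lp_int_add_le p) (auto simp: in_Lp_def)
  then have "Lp_int p R \<le> Lp_int p g + Lp_int p (\<lambda>x. g x - R x)"
    using Lp_int_uminus[of p "\<lambda>x. g x - R x"] by simp
  also have "\<dots> < \<infinity>"
    using g R(2) by (simp add: in_Lp_def ennreal_add_less_top)
  finally show ?thesis using R(1) by (simp add: in_Lp_def)
qed

lemma cc_fun_approx_by_ratA:
  fixes g :: "real^'n \<Rightarrow> complex"
  assumes p: "0 < p" and g: "g \<in> cc_funs" and "\<eta> > 0" "L \<ge> 1"
  obtains R where "R \<in> ratA" "R \<in> borel_measurable lebesgue"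
    "Lp_int p (\<lambda>x. g x - R x)
      \<le> ennreal (\<eta> powr p) * (\<integral>\<^sup>+x. ennreal ((1 / weight (\<lambda>_. L) (x::real^'n)) powr p) \<partial>lebesgue)"
proof -
  define \<psi> where "\<psi> x = g x * complex_of_real (weight (\<lambda>_. L) x)" for x
  have "continuous_on UNIV \<psi>"
    using g unfolding \<psi>_def cc_funs_def by (auto intro!: continuous_intros continuous_on_weight)
  moreover have "bounded {x. \<psi> x \<noteq> 0}"
    using g unfolding cc_funs_def \<psi>_def by (auto elim: bounded_subset)
  ultimately obtain P where P: "P \<in> bdd_rat" "continuous_on UNIV P" "\<And>x. cmod (\<psi> x - P x) < \<eta>"
    using uniform_approx_by_bdd_rat \<open>\<eta> > 0\<close> by blast
  define R where "R x = P x / complex_of_real (weight (\<lambda>_. L) x)" for x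
  have close: "cmod (g x - R x) \<le> \<eta> / weight (\<lambda>_. L) x" for x
  proof -
    have "g x - R x = (\<psi> x - P x) / complex_of_real (weight (\<lambda>_. L) x)"
      by (simp add: \<psi>_def R_def diff_divide_distrib)
    then show ?thesis
      using P(3)[of x] weight_pos[of "\<lambda>_. L" x] by (simp add: norm_divide divide_right_mono)
  qed
  have "R \<in> ratA"
    unfolding R_def using bdd_rat_div_weight_in_ratA[OF P(1) \<open>L \<ge> 1\<close>] .
  moreover have "R \<in> borel_measurable lebesgue"
    unfolding R_def using P(2)
    by (intro continuous_on_imp_lebesgue_measurable continuous_intros continuous_on_weight) auto
  moreover have "Lp_int p (\<lambda>x. g x - R x)
      \<le> ennreal (\<eta> powr p) * (\<integral>\<^sup>+x. ennreal ((1 / weight (\<lambda>_. L) (x::real^'n)) powr p) \<partial>lebesgue)"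
    using \<open>\<eta> > 0\<close> close by (intro Lp_int_le_inverse_weight p) auto
  ultimately show ?thesis by (rule that)
qed

lemma Lp_approx_ratA_cc_fun:
  fixes g :: "real^'n \<Rightarrow> complex"
  assumes p: "0 < p" "p \<le> 1" and g: "g \<in> cc_funs"
  shows "Lp_approx p {R \<in> ratA. in_Lp p R} g"
proof (rule Lp_approxI)
  fix \<delta> :: real
  assume "\<delta> > 0"
  obtain L :: nat where L: "L \<ge> 1" "real CARD('n) < 2 * real L * p"
    using exists_weight_exponent[OF p(1)] by blast
  define W where "W = enn2real (\<integral>\<^sup>+x. ennreal ((1 / weight (\<lambda>_. L) (x::real^'n)) powr p) \<partial>lebesgue)"
  have W: "(\<integral>\<^sup>+x. ennreal ((1 / weight (\<lambda>_. L) (x::real^'n)) powr p) \<partial>lebesgue) = ennreal W" "W \<ge> 0"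
    using nn_integral_inverse_weight_powr_finite[OF p(1) L(2)] by (auto simp: W_def)
  define \<eta> where "\<eta> = (\<delta> / (W + 1)) powr (1 / p)"
  have \<eta>: "\<eta> > 0" "\<eta> powr p * W < \<delta>"
    using \<open>\<delta> > 0\<close> W(2) p by (simp_all add: \<eta>_def powr_powr field_simps)
  obtain R where R: "R \<in> ratA" "R \<in> borel_measurable lebesgue"
    and bound: "Lp_int p (\<lambda>x. g x - R x)
      \<le> ennreal (\<eta> powr p) * (\<integral>\<^sup>+x. ennreal ((1 / weight (\<lambda>_. L) (x::real^'n)) powr p) \<partial>lebesgue)"
    by (rule cc_fun_approx_by_ratA[OF p(1) g \<eta>(1) L(1)])
  have "ennreal (\<eta> powr p) * ennreal W = ennreal (\<eta> powr p * W)"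
    using W(2) by (simp add: ennreal_mult)
  also have "\<dots> < ennreal \<delta>" using \<eta>(2) \<open>\<delta> > 0\<close> by (simp add: ennreal_lessI)
  finally have err: "Lp_int p (\<lambda>x. g x - R x) < ennreal \<delta>"
    using bound unfolding W(1) by (rule le_less_trans[rotated])
  have "Lp_int p (\<lambda>x. g x - R x) < \<infinity>"
    using order.strict_trans[OF err ennreal_less_top] by simp
  then have "in_Lp p R" by (rule in_Lp_of_Lp_int_diff[OF p in_Lp_cc_fun[OF p(1) g] R(2)])
  with R(1) err show "\<exists>R\<in>{R \<in> ratA. in_Lp p R}. Lp_int p (\<lambda>x. g x - R x) < ennreal \<delta>" by blast
qed

lemma Lp_approx_ratA:
  fixes f :: "real^'n \<Rightarrow> complex"
  assumes p: "0 < p" "p \<le> 1" and f: "in_Lp p f"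
  shows "Lp_approx p {R \<in> ratA. in_Lp p R} f"
  using f by (intro Lp_approx_trans[OF p _ cc_funs_subset_measurable _ Lp_approx_cc_funs[OF p f]]
      Lp_approx_ratA_cc_fun[OF p]) (auto simp: in_Lp_def)

section \<open>Series expansion\<close>

lemma Lp_approx_residuals:
  fixes f :: "real^'n \<Rightarrow> complex" and \<delta> :: "nat \<Rightarrow> real"
  assumes approx: "\<And>h. in_Lp p h \<Longrightarrow> Lp_approx p {R \<in> S. in_Lp p R} h"
    and f: "in_Lp p f" and \<delta>: "\<And>k. \<delta> k > 0"
  obtains R where "\<And>k. R k \<in> S" "\<And>k. in_Lp p (R k)" "\<And>k. in_Lp p (\<lambda>x. f x - (\<Sum>i<k. R i x))"
    "\<And>k. Lp_int p (\<lambda>x. f x - (\<Sum>i<Suc k. R i x)) < ennreal (\<delta> k)"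
proof -
  define A where "A h d = (SOME R. R \<in> S \<and> in_Lp p R \<and> Lp_int p (\<lambda>x. h x - R x) < ennreal d)" for h d
  have A: "A h d \<in> S \<and> in_Lp p (A h d) \<and> Lp_int p (\<lambda>x. h x - A h d x) < ennreal d"
    if h: "in_Lp p h" and d: "d > 0" for h d
  proof -
    obtain R where "R \<in> {R \<in> S. in_Lp p R}" "Lp_int p (\<lambda>x. h x - R x) < ennreal d"
      using Lp_approxE[OF approx[OF h] d] .
    then have "\<exists>R. R \<in> S \<and> in_Lp p R \<and> Lp_int p (\<lambda>x. h x - R x) < ennreal d" by blast
    then show ?thesis unfolding A_def by (rule someI_ex)
  qed
  define r where "r = rec_nat f (\<lambda>k h x. h x - A h (\<delta> k) x)"
  define R where "R k = A (r k) (\<delta> k)" for k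
  have r_0: "r 0 = f" and r_Suc: "r (Suc k) = (\<lambda>x. r k x - R k x)" for k
    by (simp_all add: r_def R_def)
  have r: "in_Lp p (r k)" for k
  proof (induction k)
    case 0
    then show ?case using f by (simp add: r_0)
  next
    case (Suc k)
    with A[OF Suc \<delta>[of k]] have "in_Lp p (R k)" "Lp_int p (r (Suc k)) < ennreal (\<delta> k)"
      by (simp_all add: R_def r_Suc)
    with Suc show ?case
      by (auto simp: in_Lp_def r_Suc intro: order.strict_trans[OF _ ennreal_less_top])
  qed
  have partial_sum: "r k = (\<lambda>x. f x - (\<Sum>i<k. R i x))" for k
    by (induction k) (simp_all add: r_0 r_Suc algebra_simps)
  show ?thesis
  proof (rule that)
    show "R k \<in> S" "in_Lp p (R k)" for k
      using A[OF r \<delta>] by (simp_all add: R_def)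
    show "in_Lp p (\<lambda>x. f x - (\<Sum>i<k. R i x))" for k
      using r[of k] by (simp add: partial_sum)
    show "Lp_int p (\<lambda>x. f x - (\<Sum>i<Suc k. R i x)) < ennreal (\<delta> k)" for k
      using A[OF r \<delta>, of k] unfolding partial_sum[symmetric] by (simp add: R_def r_Suc)
  qed
qed

lemma summable_adjacent_bound:
  fixes a b \<delta> :: "nat \<Rightarrow> real"
  assumes a: "\<And>k. 0 \<le> a k" "\<And>k. a k \<le> b k + b (Suc k)"
    and b: "\<And>k. 0 \<le> b k" "\<And>k. b (Suc k) \<le> \<delta> k" and "\<delta> sums D"
  shows "summable a" "(\<Sum>k. a k) \<le> b 0 + 2 * D"
proof -
  have sb: "summable (\<lambda>k. b (Suc k))"
    using b by (intro summable_comparison_test'[OF sums_summable[OF \<open>\<delta> sums D\<close>], of 0]) auto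
  then have "summable b" by (simp only: summable_Suc_iff)
  have "(\<lambda>k. b k + b (Suc k)) sums ((\<Sum>k. b k) + (\<Sum>k. b (Suc k)))"
    using \<open>summable b\<close> sb by (intro sums_add) (auto simp: summable_sums)
  also have "(\<Sum>k. b k) = b 0 + (\<Sum>k. b (Suc k))"
    using suminf_split_head[OF \<open>summable b\<close>] by simp
  finally have bsum: "(\<lambda>k. b k + b (Suc k)) sums (b 0 + 2 * (\<Sum>k. b (Suc k)))"
    by (simp add: algebra_simps)
  show sa: "summable a"
    by (rule summable_comparison_test'[OF sums_summable[OF bsum], of 0]) (use a in auto)
  have "(\<Sum>k. a k) \<le> b 0 + 2 * (\<Sum>k. b (Suc k))"
    using suminf_le[OF a(2) sa sums_summable[OF bsum]] sums_unique[OF bsum] by simp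
  also have "(\<Sum>k. b (Suc k)) \<le> D"
    using suminf_le[OF b(2) sb sums_summable[OF \<open>\<delta> sums D\<close>]] sums_unique[OF \<open>\<delta> sums D\<close>] by simp
  finally show "(\<Sum>k. a k) \<le> b 0 + 2 * D" by simp
qed

lemma Lp_norm_powr_diff_le:
  assumes p: "0 < p" "p \<le> 1" and f: "in_Lp p f" and g: "in_Lp p g"
  shows "Lp_norm p (\<lambda>x. f x - g x) powr p \<le> Lp_norm p f powr p + Lp_norm p g powr p"
proof -
  have "Lp_int p (\<lambda>x. f x + - g x) \<le> Lp_int p f + Lp_int p (\<lambda>x. - g x)"
    using f g by (intro Lp_int_add_le p) (auto simp: in_Lp_def)
  then have "enn2real (Lp_int p (\<lambda>x. f x - g x)) \<le> enn2real (Lp_int p f + Lp_int p g)"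
    using f g by (intro enn2real_mono) (auto simp: in_Lp_def Lp_int_uminus ennreal_add_less_top)
  also have "\<dots> = enn2real (Lp_int p f) + enn2real (Lp_int p g)"
    using f g by (intro enn2real_plus) (auto simp: in_Lp_def)
  finally show ?thesis by (simp add: Lp_norm_powr p(1))
qed

lemma Lp_norm_tendsto_zero:
  assumes "0 < p" "\<And>k. 0 \<le> \<delta> k" "\<And>k. Lp_int p (f k) \<le> ennreal (\<delta> k)" "\<delta> \<longlonglongrightarrow> 0"
  shows "(\<lambda>k. Lp_norm p (f k)) \<longlonglongrightarrow> 0"
proof (rule real_tendsto_sandwich[OF _ _ tendsto_const])
  show "(\<lambda>k. \<delta> k powr (1 / p)) \<longlonglongrightarrow> 0"
    using assms by (intro tendsto_zero_powrI[OF assms(4) tendsto_const]) auto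
  show "\<forall>\<^sub>F k in sequentially. 0 \<le> Lp_norm p (f k)" by (simp add: Lp_norm_def)
  have "enn2real (Lp_int p (f k)) \<le> \<delta> k" for k
    using enn2real_mono[OF assms(3)[of k]] assms(2)[of k] by simp
  then show "\<forall>\<^sub>F k in sequentially. Lp_norm p (f k) \<le> \<delta> k powr (1 / p)"
    using assms(1) unfolding Lp_norm_def by (intro always_eventually allI powr_mono2) auto
qed

lemma Lp_series_expansion:
  fixes f :: "real^'n \<Rightarrow> complex" and S :: "(real^'n \<Rightarrow> complex) set"
  assumes p: "0 < p" "p \<le> 1"
    and approx: "\<And>h. in_Lp p h \<Longrightarrow> Lp_approx p {R \<in> S. in_Lp p R} h"
    and zero: "(\<lambda>_. 0) \<in> S" and f: "in_Lp p f" and \<epsilon>: "\<epsilon> > 0"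
  shows "\<exists>R. (\<forall>k. R k \<in> S \<and> in_Lp p (R k)) \<and>
           summable (\<lambda>k. Lp_norm p (R k) powr p) \<and>
           (\<Sum>k. Lp_norm p (R k) powr p) \<le> (1 + \<epsilon>) * Lp_norm p f powr p \<and>
           (\<lambda>N. Lp_norm p (\<lambda>x. f x - (\<Sum>k<N. R k x))) \<longlonglongrightarrow> 0"
proof (cases "Lp_norm p f = 0")
  case True
  have "in_Lp p (\<lambda>_. 0)" by (simp add: in_Lp_def Lp_int_zero)
  with True zero show ?thesis
    by (intro exI[of _ "\<lambda>_ _. 0"]) (simp add: Lp_norm_def Lp_int_zero)
next
  case False
  define t where "t = Lp_norm p f powr p"
  have "t > 0" using False by (simp add: t_def Lp_norm_def)
  define \<delta> where "\<delta> k = \<epsilon> * t / 4 * (1/2)^k" for k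
  have \<delta>: "\<delta> k > 0" for k using \<open>t > 0\<close> \<epsilon> by (simp add: \<delta>_def)
  have \<delta>_sums: "\<delta> sums (\<epsilon> * t / 2)"
    using sums_mult[OF geometric_sums[of "1/2::real"], of "\<epsilon> * t / 4"] by (simp add: \<delta>_def[abs_def])
  obtain R where R: "\<And>k. R k \<in> S" "\<And>k. in_Lp p (R k)"
    and residual: "\<And>k. in_Lp p (\<lambda>x. f x - (\<Sum>i<k. R i x))"
    and err: "\<And>k. Lp_int p (\<lambda>x. f x - (\<Sum>i<Suc k. R i x)) < ennreal (\<delta> k)"
    by (rule Lp_approx_residuals[OF approx f, of \<delta>]) (use \<delta> in auto)
  define r where "r k = (\<lambda>x. f x - (\<Sum>i<k. R i x))" for k
  have r: "in_Lp p (r k)" for k using residual by (simp add: r_def)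
  define b where "b k = Lp_norm p (r k) powr p" for k
  have b_Suc: "b (Suc k) \<le> \<delta> k" for k
    using enn2real_mono[OF less_imp_le[OF err[of k]]] \<delta>[of k]
    by (simp add: b_def r_def Lp_norm_powr p(1))
  have "Lp_norm p (R k) powr p \<le> b k + b (Suc k)" for k
  proof -
    have "R k = (\<lambda>x. r k x - r (Suc k) x)" by (simp add: r_def)
    then show ?thesis using Lp_norm_powr_diff_le[OF p r r] by (simp add: b_def)
  qed
  then have "summable (\<lambda>k. Lp_norm p (R k) powr p)"
    and "(\<Sum>k. Lp_norm p (R k) powr p) \<le> b 0 + 2 * (\<epsilon> * t / 2)"
    using summable_adjacent_bound[OF _ _ _ b_Suc \<delta>_sums] by (auto simp: b_def)
  moreover have "b 0 + 2 * (\<epsilon> * t / 2) = (1 + \<epsilon>) * Lp_norm p f powr p"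
    by (simp add: b_def r_def t_def algebra_simps)
  ultimately have "summable (\<lambda>k. Lp_norm p (R k) powr p)"
    "(\<Sum>k. Lp_norm p (R k) powr p) \<le> (1 + \<epsilon>) * Lp_norm p f powr p"
    by simp_all
  moreover have "(\<lambda>N. Lp_norm p (r N)) \<longlonglongrightarrow> 0"
  proof (rule LIMSEQ_imp_Suc, rule Lp_norm_tendsto_zero[OF p(1)])
    show "\<delta> \<longlonglongrightarrow> 0" using \<delta>_sums by (rule summable_LIMSEQ_zero[OF sums_summable])
    show "Lp_int p (r (Suc k)) \<le> ennreal (\<delta> k)" for k using err[of k] by (simp add: r_def)
  qed (use \<delta> in \<open>simp add: less_imp_le\<close>)
  ultimately show ?thesis using R unfolding r_def by blast
qed

theorem lemma3p2:
  fixes p :: real and f :: "real^'n \<Rightarrow> complex" and \<epsilon> :: real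
  assumes "0 < p" "p < 1" "in_Lp p f" "\<epsilon> > 0"
  shows "\<exists>R :: nat \<Rightarrow> real^'n \<Rightarrow> complex.
           (\<forall>k. R k \<in> ratA \<and> in_Lp p (R k)) \<and>
           summable (\<lambda>k. Lp_norm p (R k) powr p) \<and>
           (\<Sum>k. Lp_norm p (R k) powr p) \<le> (1 + \<epsilon>) * Lp_norm p f powr p \<and>
           (\<lambda>N. Lp_norm p (\<lambda>x. f x - (\<Sum>k<N. R k x))) \<longlonglongrightarrow> 0"
proof -
  have p: "0 < p" "p \<le> 1" using assms(1,2) by auto
  show ?thesis
    using Lp_series_expansion[OF p Lp_approx_ratA[OF p] zero_in_ratA assms(3,4)] by blast
qed

end
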